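(* The figure-eight knot $4_1$ has tile number $\tau(4_1)=4$; in particular, $4_1$ can be represented on a $1\times 4$ virtual row mosaic.
   Context: Mosaic tiles are the eleven standard unit-square tiles $T_0,\dots,T_{10}$: $T_0$ is blank; $T_1,\dots,T_4$ each contain a single arc joining the midpoints of two adjacent sides; $T_5$ (horizontal) and $T_6$ (vertical) each contain a single straight segment joining midpoints of opposite sides; $T_7,T_8$ each contain two disjoint arcs, each joining midpoints of two adjacent sides; $T_9,T_{10}$ are the two crossing tiles, containing a horizontal and a vertical segment crossing at the center, with the vertical strand over in one and the horizontal strand over in the other. A virtual rectangular mosaic is an $m\times n$ array of such tiles together with a pairing (with orientation) of the $2(m+n)$ boundary unit edges of the array such that the quotient ("closure") is a closed orientable surface $\Sigma_D$ carrying a knot or link diagram $D$ (arcs must meet consistently across identified edges and across adjacent tiles); this represents a virtual knot/link (a knot diagram on a closed orientable surface up to the usual equivalence). The genus of the mosaic is the genus of $\Sigma_D$. A row mosaic is a $1\times n$ virtual rectangular mosaic. The tile number $\tau(K)$ of a virtual knot $K$ is the minimal number of tiles $mn$ of an $m\times n$ virtual rectangular mosaic representing $K$. *)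

theory Defs
  imports Main
begin

text \<open>A (knot) Gauss diagram: a cyclic word of crossing passages, each entry being
  (crossing label, True = over passage / False = under passage), together with a sign
  for each crossing (True = positive crossing).  The sign of a crossing is
  sign det(d_over, d_under) w.r.t. the orientation of the surface.\<close>

type_synonym gword = "(nat \<times> bool) list"
type_synonym gdiag = "gword \<times> (nat \<Rightarrow> bool)"

definition gauss_wf :: "gword \<Rightarrow> bool" where
  "gauss_wf w \<longleftrightarrow> distinct w \<and> (\<forall>a ov. (a, ov) \<in> set w \<longrightarrow> (a, \<not> ov) \<in> set w)"

definition ordpair :: "bool \<Rightarrow> 'a \<Rightarrow> 'a \<Rightarrow> 'a \<times> 'a" where
  "ordpair b x y = (if b then (x, y) else (y, x))"

text \<open>Admissible Reidemeister III configurations: three strand segments, the top one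
  passing over crossings x,y, the middle one under x and over z, the bottom one under y,z.
  The boolean oT/oM/oB records whether the segment meets x/x/y first.  The two parity
  conditions characterise exactly the configurations realised by three oriented lines
  in the oriented plane (with the sign convention above).\<close>

definition r3_ok :: "(nat \<Rightarrow> bool) \<Rightarrow> ((nat \<times> bool) \<times> (nat \<times> bool)) set \<Rightarrow> bool" where
  "r3_ok s S \<longleftrightarrow> (\<exists>x y z oT oM oB. distinct [x, y, z] \<and>
     S = {ordpair oT (x, True) (y, True), ordpair oM (x, False) (z, True),
          ordpair oB (y, False) (z, False)} \<and>
     ((oM \<noteq> oB) = (s x \<noteq> s y)) \<and> ((oT \<noteq> oB) = (s x \<noteq> s z)))"

definition gmove :: "gdiag \<Rightarrow> gdiag \<Rightarrow> bool" where
  "gmove d d' \<longleftrightarrow> gauss_wf (fst d) \<and> gauss_wf (fst d') \<and>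
   ( \<comment> \<open>cyclic rotation of the word\<close>
     (fst d' = rotate1 (fst d) \<and> snd d' = snd d)
   \<or> \<comment> \<open>relabelling of crossings\<close>
     (\<exists>f. inj_on f (fst ` set (fst d)) \<and> fst d' = map (\<lambda>(a, ov). (f a, ov)) (fst d) \<and>
          (\<forall>a\<in>fst ` set (fst d). snd d' (f a) = snd d a))
   \<or> \<comment> \<open>Reidemeister I (removal)\<close>
     (\<exists>u v a ov. fst d = u @ [(a, ov), (a, \<not> ov)] @ v \<and> fst d' = u @ v \<and> snd d' = snd d)
   \<or> \<comment> \<open>Reidemeister II (removal)\<close>
     (\<exists>u1 u2 u3 a b c e ov. fst d = u1 @ [(a, ov), (b, ov)] @ u2 @ [(c, \<not> ov), (e, \<not> ov)] @ u3 \<and>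
          {c, e} = {a, b} \<and> a \<noteq> b \<and> snd d a \<noteq> snd d b \<and>
          fst d' = u1 @ u2 @ u3 \<and> snd d' = snd d)
   \<or> \<comment> \<open>Reidemeister III\<close>
     (\<exists>u1 u2 u3 u4 p1 p2 q1 q2 r1 r2.
          fst d = u1 @ [p1, p2] @ u2 @ [q1, q2] @ u3 @ [r1, r2] @ u4 \<and>
          fst d' = u1 @ [p2, p1] @ u2 @ [q2, q1] @ u3 @ [r2, r1] @ u4 \<and>
          r3_ok (snd d) {(p1, p2), (q1, q2), (r1, r2)} \<and> snd d' = snd d))"

text \<open>Equivalence of Gauss diagrams (= virtual knot equivalence).\<close>
definition gequiv :: "gdiag \<Rightarrow> gdiag \<Rightarrow> bool" where
  "gequiv = equivclp gmove"

text \<open>Figure-eight knot: closure of the braid s1 s2^-1 s1 s2^-1.\<close>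
definition figure_eight :: gdiag where
  "figure_eight =
    ([(1, True), (2, False), (3, True), (1, False), (4, True), (3, False), (2, True), (4, False)],
     (\<lambda>a. a = 1 \<or> a = 4))"

datatype side = N | E | S | W

datatype tile = T0 | T1 | T2 | T3 | T4 | T5 | T6 | T7 | T8 | T9 | T10

text \<open>T1..T4: single arcs N-W, N-E, E-S, S-W; T5 horizontal,
  T6 vertical; T7: arcs N-W and S-E; T8: arcs N-E and S-W; T9 (vertical over) and
  T10 (horizontal over): crossings.\<close>

fun partner :: "tile \<Rightarrow> side \<Rightarrow> side option" where
  "partner T0 _ = None"
| "partner T1 N = Some W" | "partner T1 W = Some N" | "partner T1 _ = None"
| "partner T2 N = Some E" | "partner T2 E = Some N" | "partner T2 _ = None"
| "partner T3 E = Some S" | "partner T3 S = Some E" | "partner T3 _ = None"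
| "partner T4 S = Some W" | "partner T4 W = Some S" | "partner T4 _ = None"
| "partner T5 W = Some E" | "partner T5 E = Some W" | "partner T5 _ = None"
| "partner T6 N = Some S" | "partner T6 S = Some N" | "partner T6 _ = None"
| "partner T7 N = Some W" | "partner T7 W = Some N" | "partner T7 S = Some E" | "partner T7 E = Some S"
| "partner T8 N = Some E" | "partner T8 E = Some N" | "partner T8 S = Some W" | "partner T8 W = Some S"
| "partner T9 N = Some S" | "partner T9 S = Some N" | "partner T9 W = Some E" | "partner T9 E = Some W"
| "partner T10 N = Some S" | "partner T10 S = Some N" | "partner T10 W = Some E" | "partner T10 E = Some W"

text \<open>A half-edge (i, j, d): side d of the tile in row i (rows numbered top to bottom),
  column j.  Tile arrays are M :: nat => nat => tile, M i j for i < m, j < n.\<close>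

type_synonym hedge = "nat \<times> nat \<times> side"

definition boundary_edges :: "nat \<Rightarrow> nat \<Rightarrow> hedge set" where
  "boundary_edges m n = {(i, j, d). i < m \<and> j < n \<and>
     (d = N \<and> i = 0 \<or> d = S \<and> i = m - 1 \<or> d = W \<and> j = 0 \<or> d = E \<and> j = n - 1)}"

definition across :: "nat \<Rightarrow> nat \<Rightarrow> (hedge \<Rightarrow> hedge) \<Rightarrow> hedge \<Rightarrow> hedge" where
  "across m n P h = (if h \<in> boundary_edges m n then P h else
     (case h of (i, j, N) \<Rightarrow> (i - 1, j, S) | (i, j, S) \<Rightarrow> (i + 1, j, N)
              | (i, j, W) \<Rightarrow> (i, j - 1, E) | (i, j, E) \<Rightarrow> (i, j + 1, W)))"

definition has_end :: "(nat \<Rightarrow> nat \<Rightarrow> tile) \<Rightarrow> hedge \<Rightarrow> bool" where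
  "has_end M h = (case h of (i, j, d) \<Rightarrow> partner (M i j) d \<noteq> None)"

text \<open>An m x n virtual rectangular mosaic: P is a fixed-point-free pairing of the
  2(m+n) boundary unit edges, and arcs meet consistently across all edges.  (The gluing
  directions are the orientation-reversing ones, the only ones giving an orientable
  closure.)\<close>
definition virtual_mosaic :: "nat \<Rightarrow> nat \<Rightarrow> (nat \<Rightarrow> nat \<Rightarrow> tile) \<Rightarrow> (hedge \<Rightarrow> hedge) \<Rightarrow> bool" where
  "virtual_mosaic m n M P \<longleftrightarrow> 1 \<le> m \<and> 1 \<le> n \<and>
     (\<forall>e \<in> boundary_edges m n. P e \<in> boundary_edges m n \<and> P e \<noteq> e \<and> P (P e) = e) \<and>
     (\<forall>i < m. \<forall>j < n. \<forall>d. has_end M (i, j, d) = has_end M (across m n P (i, j, d)))"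

definition exit_of :: "(nat \<Rightarrow> nat \<Rightarrow> tile) \<Rightarrow> hedge \<Rightarrow> hedge" where
  "exit_of M h = (case h of (i, j, d) \<Rightarrow> (i, j, the (partner (M i j) d)))"

definition step :: "nat \<Rightarrow> nat \<Rightarrow> (nat \<Rightarrow> nat \<Rightarrow> tile) \<Rightarrow> (hedge \<Rightarrow> hedge) \<Rightarrow> hedge \<Rightarrow> hedge" where
  "step m n M P h = across m n P (exit_of M h)"

text \<open>An oriented traversal of the diagram as a single closed curve (i.e. the diagram is
  a knot diagram): the cyclic list of half-edges through which the curve enters tiles,
  each arc traversed exactly once, and every arc endpoint is visited.\<close>
definition knot_traversal ::
  "nat \<Rightarrow> nat \<Rightarrow> (nat \<Rightarrow> nat \<Rightarrow> tile) \<Rightarrow> (hedge \<Rightarrow> hedge) \<Rightarrow> hedge list \<Rightarrow> bool" where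
  "knot_traversal m n M P hs \<longleftrightarrow> hs \<noteq> [] \<and> distinct hs \<and>
     (\<forall>h \<in> set hs. case h of (i, j, d) \<Rightarrow> i < m \<and> j < n \<and> has_end M h) \<and>
     (\<forall>k < length hs. hs ! ((k + 1) mod length hs) = step m n M P (hs ! k)) \<and>
     (\<forall>i < m. \<forall>j < n. \<forall>d. has_end M (i, j, d) \<longrightarrow>
        (i, j, d) \<in> set hs \<or> (\<exists>h \<in> set hs. exit_of M h = (i, j, d)))"

definition is_crossing :: "tile \<Rightarrow> bool" where
  "is_crossing t \<longleftrightarrow> t = T9 \<or> t = T10"

definition passage :: "nat \<Rightarrow> (nat \<Rightarrow> nat \<Rightarrow> tile) \<Rightarrow> hedge \<Rightarrow> (nat \<times> bool) list" where
  "passage n M h = (case h of (i, j, d) \<Rightarrow>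
     (if M i j = T9 then [(i * n + j, d = N \<or> d = S)]
      else if M i j = T10 then [(i * n + j, d = W \<or> d = E)]
      else []))"

text \<open>Crossing signs, computed in the plane of the rectangle (x to the right, y upward):
  sign = sign det(d_over, d_under).\<close>
definition mosaic_sign :: "nat \<Rightarrow> (nat \<Rightarrow> nat \<Rightarrow> tile) \<Rightarrow> hedge list \<Rightarrow> nat \<Rightarrow> bool" where
  "mosaic_sign n M hs l = (let i = l div n; j = l mod n;
      east = ((i, j, W) \<in> set hs); north = ((i, j, S) \<in> set hs) in
      (if M i j = T10 then east = north else east \<noteq> north))"

definition mosaic_gauss :: "nat \<Rightarrow> (nat \<Rightarrow> nat \<Rightarrow> tile) \<Rightarrow> hedge list \<Rightarrow> gdiag" where
  "mosaic_gauss n M hs = (concat (map (passage n M) hs), mosaic_sign n M hs)"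

definition mosaic_represents ::
  "nat \<Rightarrow> nat \<Rightarrow> (nat \<Rightarrow> nat \<Rightarrow> tile) \<Rightarrow> (hedge \<Rightarrow> hedge) \<Rightarrow> gdiag \<Rightarrow> bool" where
  "mosaic_represents m n M P K \<longleftrightarrow> virtual_mosaic m n M P \<and>
     (\<exists>hs. knot_traversal m n M P hs \<and> gequiv (mosaic_gauss n M hs) K)"

definition tile_number :: "gdiag \<Rightarrow> nat" where
  "tile_number K = (LEAST t. \<exists>m n M P. m * n = t \<and> mosaic_represents m n M P K)"

end

theory Submission
  imports Defs "HOL-Library.Numeral_Type"
begin

(* The upper bound is an explicit 1 x 4 row mosaic of four crossing tiles whose traversal reads
   off a relabelling of the Gauss word of the figure-eight knot.  For the lower bound we use Fox
   5-colourings, i.e. colourings by the kei Z/5 with x \<rhd> y = 2y - x: admitting a nontrivial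
   one is invariant under all Gauss diagram moves, the figure-eight knot admits one, and an
   exhaustive check over Z/5 shows that no Gauss diagram with at most three crossings does.
   A mosaic with fewer than four tiles has fewer than four crossings. *)

lemma gauss_wf_other_passage: "gauss_wf w \<Longrightarrow> (a, ov) \<in> set w \<Longrightarrow> (a, ov') \<in> set w"
  unfolding gauss_wf_def by (cases "ov' = ov") auto

lemma crossing_notin_if_both_passages:
  assumes "set w \<inter> set m = {}" "(a, True) \<in> set m" "(a, False) \<in> set m"
  shows "a \<notin> fst ` set w"
proof
  assume "a \<in> fst ` set w"
  then obtain ov where "(a, ov) \<in> set w" by force
  moreover have "(a, ov) \<in> set m" using assms(2,3) by (cases ov) auto
  ultimately show False using assms(1) by blast
qed

lemma r3_pairs_swap:
  assumes "{(s1, t1), (s2, t2), (s3, t3)} = {ordpair oT (x, True) (y, True),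
      ordpair oM (x, False) (z, True), ordpair oB (y, False) (z, False)}"
  shows "{(t1, s1), (t2, s2), (t3, s3)} = {ordpair (\<not> oT) (x, True) (y, True),
      ordpair (\<not> oM) (x, False) (z, True), ordpair (\<not> oB) (y, False) (z, False)}"
proof -
  have "{(t1, s1), (t2, s2), (t3, s3)} = prod.swap ` {(s1, t1), (s2, t2), (s3, t3)}"
    by simp
  then show ?thesis
    unfolding assms by (simp add: ordpair_def)
qed

lemma gequiv_gauss_wf:
  assumes "gequiv d d'" and "gauss_wf (fst d')"
  shows "gauss_wf (fst d)"
  using assms(1) unfolding gequiv_def equivclp_def
proof (cases rule: converse_rtranclpE)
  case (step d'')
  then show ?thesis unfolding symclp_def gmove_def by blast
qed (use assms(2) in simp)

section \<open>Colourings of Gauss words by a kei\<close>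

locale kei =
  fixes act :: "'a \<Rightarrow> 'a \<Rightarrow> 'a"  (infixl \<open>\<rhd>\<close> 70)
  assumes kei_idem [simp]: "x \<rhd> x = x"
    and kei_invol [simp]: "x \<rhd> y \<rhd> y = x"
    and kei_right_distrib: "x \<rhd> y \<rhd> z = (x \<rhd> z) \<rhd> (y \<rhd> z)"
begin

lemma kei_fixed_iff: "y \<rhd> x = x \<longleftrightarrow> y = x"
  by (metis kei_idem kei_invol)

text \<open>Arc colourings in the language of Gauss words: oc a is the colour of the arc passing over
  crossing a; walking along the word from colour c, the current colour must be oc a at an over
  passage of a and changes from p to p \<rhd> oc a at an under passage of a.\<close>

fun pass :: "(nat \<Rightarrow> 'a) \<Rightarrow> 'a \<Rightarrow> nat \<times> bool \<Rightarrow> 'a" where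
  "pass oc p (a, ov) = (if ov then p else p \<rhd> oc a)"

fun admissible :: "(nat \<Rightarrow> 'a) \<Rightarrow> 'a \<Rightarrow> gword \<Rightarrow> bool" where
  "admissible oc p [] = True"
| "admissible oc p ((a, ov) # w) \<longleftrightarrow> (ov \<longrightarrow> oc a = p) \<and> admissible oc (pass oc p (a, ov)) w"

fun walk_colours :: "(nat \<Rightarrow> 'a) \<Rightarrow> 'a \<Rightarrow> gword \<Rightarrow> 'a set" where
  "walk_colours oc p [] = {p}"
| "walk_colours oc p (x # w) = insert p (walk_colours oc (pass oc p x) w)"

definition colouring :: "(nat \<Rightarrow> 'a) \<Rightarrow> 'a \<Rightarrow> gword \<Rightarrow> bool" where
  "colouring oc c w \<longleftrightarrow> admissible oc c w \<and> foldl (pass oc) c w = c"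

definition nontrivially_colourable :: "gword \<Rightarrow> bool" where
  "nontrivially_colourable w \<longleftrightarrow>
     (\<exists>oc c. colouring oc c w \<and> (\<exists>a\<in>fst ` set w. \<exists>b\<in>fst ` set w. oc a \<noteq> oc b))"

lemma nontrivially_colourableI:
  "colouring oc c w \<Longrightarrow> a \<in> fst ` set w \<Longrightarrow> b \<in> fst ` set w \<Longrightarrow> oc a \<noteq> oc b
    \<Longrightarrow> nontrivially_colourable w"
  unfolding nontrivially_colourable_def by blast

lemma admissible_append [simp]:
  "admissible oc p (xs @ ys) \<longleftrightarrow> admissible oc p xs \<and> admissible oc (foldl (pass oc) p xs) ys"
proof (induction xs arbitrary: p)
  case (Cons x xs)
  then show ?case by (cases x) simp
qed simp

lemma start_in_walk_colours: "p \<in> walk_colours oc p w"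
  by (cases w) auto

lemma prefix_end_in_walk_colours: "foldl (pass oc) p xs \<in> walk_colours oc p (xs @ ys)"
  by (induction xs arbitrary: p) (simp_all add: start_in_walk_colours)

lemma over_colour_in_walk_colours:
  "admissible oc p w \<Longrightarrow> (a, True) \<in> set w \<Longrightarrow> oc a \<in> walk_colours oc p w"
proof (induction w arbitrary: p)
  case (Cons x w)
  then show ?case by (cases x) auto
qed simp

lemma walk_relabel:
  assumes "\<forall>x\<in>set w. oc' (f (fst x)) = oc (fst x)"
  shows "admissible oc' p (map (\<lambda>(a, ov). (f a, ov)) w) = admissible oc p w \<and>
    foldl (pass oc') p (map (\<lambda>(a, ov). (f a, ov)) w) = foldl (pass oc) p w \<and>
    walk_colours oc' p (map (\<lambda>(a, ov). (f a, ov)) w) = walk_colours oc p w"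
  using assms
proof (induction w arbitrary: p)
  case (Cons x w)
  then show ?case by (cases x) simp
qed simp

lemma walk_cong:
  assumes "\<forall>a\<in>fst ` set w. oc' a = oc a"
  shows "admissible oc' p w = admissible oc p w \<and> foldl (pass oc') p w = foldl (pass oc) p w \<and>
    walk_colours oc' p w = walk_colours oc p w"
  using walk_relabel[of w oc' id oc p] assms by (simp add: case_prod_unfold)

lemma walk_ignores_over_passages:
  "foldl (pass oc) p (filter (\<lambda>x. \<not> snd x) w) = foldl (pass oc) p w \<and>
   walk_colours oc p (filter (\<lambda>x. \<not> snd x) w) = walk_colours oc p w"
proof (induction w arbitrary: p)
  case (Cons x w)
  then show ?case by (cases x) (simp add: insert_absorb[OF start_in_walk_colours])
qed simp

lemma start_colour_eq_if_constant:
  assumes "admissible oc p w" "\<forall>x\<in>set w. oc (fst x) = r" "(a, True) \<in> set w"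
  shows "p = r"
  using assms
proof (induction w arbitrary: p)
  case (Cons x w)
  obtain b ov where x: "x = (b, ov)" by force
  show ?case
  proof (cases ov)
    case True
    with Cons.prems x show ?thesis by auto
  next
    case False
    with Cons.prems x have "\<not> ov" "oc b = r" "(a, True) \<in> set w" "admissible oc (p \<rhd> r) w"
      by auto
    with Cons.IH[of "p \<rhd> r"] Cons.prems(2) have "p \<rhd> r = r" by simp
    then show ?thesis by (simp only: kei_fixed_iff)
  qed
qed simp

lemma walk_colours_constant:
  assumes "\<forall>x\<in>set w. oc (fst x) = r"
  shows "walk_colours oc r w = {r}"
  using assms
proof (induction w)
  case (Cons x w)
  then show ?case by (cases x) simp
qed simp

text \<open>When a move deletes crossings, the colours of their over-arcs survive as arc colours of
  the smaller diagram; this transports nontriviality.\<close>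

lemma nontrivially_colourable_if_covered:
  assumes "gauss_wf w" "colouring oc c w"
    and "fst ` set v \<subseteq> fst ` set w \<union> A" "oc ` A \<subseteq> walk_colours oc c w"
    and "a \<in> fst ` set v" "b \<in> fst ` set v" "oc a \<noteq> oc b"
  shows "nontrivially_colourable w"
proof (rule ccontr)
  assume "\<not> nontrivially_colourable w"
  then have same: "oc a' = oc b'" if "a' \<in> fst ` set w" "b' \<in> fst ` set w" for a' b'
    using that assms(2) nontrivially_colourableI by blast
  obtain r where walk: "walk_colours oc c w = {r}" and r: "\<forall>x\<in>set w. oc (fst x) = r"
  proof (cases w)
    case Nil
    then show ?thesis using that by simp
  next
    case (Cons x0 w')
    obtain a0 ov0 where x0: "x0 = (a0, ov0)" by force
    have "(a0, True) \<in> set w"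
      using gauss_wf_other_passage[OF assms(1), of a0 ov0 True] Cons x0 by simp
    moreover have const: "\<forall>x\<in>set w. oc (fst x) = oc a0"
    proof
      fix x assume "x \<in> set w"
      then show "oc (fst x) = oc a0" using same[of "fst x" a0] Cons x0 by force
    qed
    ultimately have "c = oc a0"
      using start_colour_eq_if_constant assms(2) unfolding colouring_def by blast
    then show ?thesis using that walk_colours_constant const by blast
  qed
  have "oc x = r" if "x \<in> fst ` set v" for x
  proof -
    have "x \<in> fst ` set w \<union> A" using that assms(3) by blast
    then show ?thesis using r assms(4) walk by auto
  qed
  then show False using assms(5-7) by simp
qed

lemma colouring_rotate:
  "colouring oc c (xs @ ys) \<Longrightarrow> colouring oc (foldl (pass oc) c xs) (ys @ xs)"
  by (simp add: colouring_def)

lemma nontrivially_colourable_rotate: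
  assumes "nontrivially_colourable (xs @ ys)"
  shows "nontrivially_colourable (ys @ xs)"
proof -
  obtain oc c a b where col: "colouring oc c (xs @ ys)" and "oc a \<noteq> oc b"
    and "a \<in> fst ` set (xs @ ys)" "b \<in> fst ` set (xs @ ys)"
    using assms unfolding nontrivially_colourable_def by blast
  then show ?thesis using nontrivially_colourableI[OF colouring_rotate[OF col]] by auto
qed

lemma nontrivially_colourable_relabel:
  assumes "inj_on f (fst ` set w)"
  shows "nontrivially_colourable (map (\<lambda>(a, ov). (f a, ov)) w) \<longleftrightarrow> nontrivially_colourable w"
    (is "nontrivially_colourable ?w' \<longleftrightarrow> _")
proof
  have crossings: "fst ` set ?w' = f ` fst ` set w"
    by (force simp: image_image case_prod_unfold)
  assume "nontrivially_colourable ?w'"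
  then obtain oc c a b where col: "colouring oc c ?w'"
    and "a \<in> fst ` set w" "b \<in> fst ` set w" "oc (f a) \<noteq> oc (f b)"
    unfolding nontrivially_colourable_def crossings by blast
  moreover have "colouring (oc \<circ> f) c w"
    using col walk_relabel[of w oc f "oc \<circ> f" c] unfolding colouring_def by simp
  ultimately show "nontrivially_colourable w"
    using nontrivially_colourableI[of "oc \<circ> f"] by auto
next
  have crossings: "fst ` set ?w' = f ` fst ` set w"
    by (force simp: image_image case_prod_unfold)
  assume "nontrivially_colourable w"
  then obtain oc c a b where col: "colouring oc c w"
    and ab: "a \<in> fst ` set w" "b \<in> fst ` set w" "oc a \<noteq> oc b"
    unfolding nontrivially_colourable_def by blast
  define oc' where "oc' = oc \<circ> inv_into (fst ` set w) f"
  have "\<forall>x\<in>set w. oc' (f (fst x)) = oc (fst x)"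
    using assms by (simp add: oc'_def)
  then have "colouring oc' c ?w'"
    using col walk_relabel[of w oc' f oc c] unfolding colouring_def by simp
  moreover have "oc' (f a) \<noteq> oc' (f b)" "f a \<in> fst ` set ?w'" "f b \<in> fst ` set ?w'"
    using ab assms crossings by (simp_all add: oc'_def)
  ultimately show "nontrivially_colourable ?w'"
    using nontrivially_colourableI by blast
qed

lemma colouring_remove_neutral:
  assumes "admissible oc (foldl (pass oc) c u) m"
    and "foldl (pass oc) (foldl (pass oc) c u) m = foldl (pass oc) c u"
  shows "colouring oc c (u @ m @ v) \<longleftrightarrow> colouring oc c (u @ v)"
  using assms by (simp add: colouring_def)

lemma admissible_r1_block: "admissible oc p [(a, ov), (a, \<not> ov)] \<longleftrightarrow> oc a = p"
  by (cases ov) (auto simp: kei_fixed_iff eq_commute[of "oc a"])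

lemma foldl_r1_block: "oc a = p \<Longrightarrow> foldl (pass oc) p [(a, ov), (a, \<not> ov)] = p"
  by (cases ov) auto

lemma nontrivially_colourable_r1_remove:
  assumes "gauss_wf (u @ v)" and "nontrivially_colourable (u @ [(a, ov), (a, \<not> ov)] @ v)"
  shows "nontrivially_colourable (u @ v)"
proof -
  let ?m = "[(a, ov), (a, \<not> ov)]"
  obtain oc c x y where col: "colouring oc c (u @ ?m @ v)"
    and xy: "x \<in> fst ` set (u @ ?m @ v)" "y \<in> fst ` set (u @ ?m @ v)" "oc x \<noteq> oc y"
    using assms(2) unfolding nontrivially_colourable_def by blast
  have "admissible oc (foldl (pass oc) c u) ?m"
    using col by (simp only: colouring_def admissible_append)
  then have over: "oc a = foldl (pass oc) c u"
    by (simp only: admissible_r1_block)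
  then have "colouring oc c (u @ v)"
    using col colouring_remove_neutral[of oc c u ?m v] foldl_r1_block[of oc a _ ov, OF over]
    by (simp only: admissible_r1_block simp_thms)
  moreover have "fst ` set (u @ ?m @ v) \<subseteq> fst ` set (u @ v) \<union> {a}"
    by auto
  moreover have "oc ` {a} \<subseteq> walk_colours oc c (u @ v)"
    using over prefix_end_in_walk_colours by simp
  ultimately show ?thesis
    by (rule nontrivially_colourable_if_covered[OF assms(1) _ _ _ xy])
qed

lemma nontrivially_colourable_r1_insert:
  assumes "gauss_wf (u @ [(a, ov), (a, \<not> ov)] @ v)" and "nontrivially_colourable (u @ v)"
  shows "nontrivially_colourable (u @ [(a, ov), (a, \<not> ov)] @ v)"
proof -
  let ?m = "[(a, ov), (a, \<not> ov)]"
  obtain oc c x y where col: "colouring oc c (u @ v)"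
    and xy: "x \<in> fst ` set (u @ v)" "y \<in> fst ` set (u @ v)" "oc x \<noteq> oc y"
    using assms(2) unfolding nontrivially_colourable_def by blast
  have "set (u @ v) \<inter> set ?m = {}"
    using assms(1) unfolding gauss_wf_def by auto
  then have fresh: "a \<notin> fst ` set (u @ v)"
    by (rule crossing_notin_if_both_passages) (cases ov; simp)+
  define oc' where "oc' = oc(a := foldl (pass oc) c u)"
  have same: "\<forall>z\<in>fst ` set (u @ v). oc' z = oc z"
    using fresh by (auto simp: oc'_def)
  then have "foldl (pass oc') c u = foldl (pass oc) c u" "colouring oc' c (u @ v)"
    using col walk_cong[of "u @ v" oc' oc c] walk_cong[of u oc' oc c]
    unfolding colouring_def by auto
  moreover have "oc' a = foldl (pass oc') c u"
    using calculation(1) by (simp add: oc'_def)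
  ultimately have "colouring oc' c (u @ ?m @ v)"
    using colouring_remove_neutral[of oc' c u ?m v] foldl_r1_block[of oc' a _ ov]
    by (simp only: admissible_r1_block simp_thms)
  moreover have "oc' x \<noteq> oc' y"
    using xy same by (metis image_eqI)
  ultimately show ?thesis
    using xy nontrivially_colourableI[of oc' c "u @ ?m @ v" x y] by auto
qed

lemma admissible_r2_blocks:
  assumes "{a', b'} = {a, b}"
  shows "admissible oc p [(a, ov), (b, ov)] \<and> admissible oc q [(a', \<not> ov), (b', \<not> ov)] \<longleftrightarrow>
    oc a = (if ov then p else q) \<and> oc b = (if ov then p else q)"
  using assms by (cases ov) (auto simp: doubleton_eq_iff)

lemma foldl_r2_blocks:
  assumes "{a', b'} = {a, b}" and "oc a = oc b"
  shows "foldl (pass oc) p [(a, ov), (b, ov)] = p \<and> foldl (pass oc) q [(a', \<not> ov), (b', \<not> ov)] = q"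
  using assms by (cases ov) (auto simp: doubleton_eq_iff)

lemma colouring_remove_r2_blocks:
  assumes "{a', b'} = {a, b}" and "oc a = oc b"
    and "admissible oc (foldl (pass oc) c u1) [(a, ov), (b, ov)]"
    and "admissible oc (foldl (pass oc) c (u1 @ u2)) [(a', \<not> ov), (b', \<not> ov)]"
  shows "colouring oc c (u1 @ [(a, ov), (b, ov)] @ u2 @ [(a', \<not> ov), (b', \<not> ov)] @ u3) \<longleftrightarrow>
    colouring oc c (u1 @ u2 @ u3)"
proof -
  have "colouring oc c (u1 @ [(a, ov), (b, ov)] @ u2 @ [(a', \<not> ov), (b', \<not> ov)] @ u3) \<longleftrightarrow>
      colouring oc c ((u1 @ u2) @ [(a', \<not> ov), (b', \<not> ov)] @ u3)"
    using colouring_remove_neutral[of oc c u1 "[(a, ov), (b, ov)]"] assms(3) foldl_r2_blocks[OF assms(1,2)]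
    by simp
  also have "\<dots> \<longleftrightarrow> colouring oc c (u1 @ u2 @ u3)"
    using colouring_remove_neutral[of oc c "u1 @ u2" "[(a', \<not> ov), (b', \<not> ov)]"] assms(4)
      foldl_r2_blocks[OF assms(1,2)]
    by simp
  finally show ?thesis .
qed

lemma nontrivially_colourable_r2_remove:
  assumes "gauss_wf (u1 @ u2 @ u3)" and ab: "{a', b'} = {a, b}"
    and "nontrivially_colourable (u1 @ [(a, ov), (b, ov)] @ u2 @ [(a', \<not> ov), (b', \<not> ov)] @ u3)"
  shows "nontrivially_colourable (u1 @ u2 @ u3)"
proof -
  let ?m1 = "[(a, ov), (b, ov)]" and ?m2 = "[(a', \<not> ov), (b', \<not> ov)]"
  obtain oc c x y where col: "colouring oc c (u1 @ ?m1 @ u2 @ ?m2 @ u3)"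
    and xy: "x \<in> fst ` set (u1 @ ?m1 @ u2 @ ?m2 @ u3)" "y \<in> fst ` set (u1 @ ?m1 @ u2 @ ?m2 @ u3)"
      "oc x \<noteq> oc y"
    using assms(3) unfolding nontrivially_colourable_def by blast
  define p where "p = foldl (pass oc) c u1"
  define q where "q = foldl (pass oc) (foldl (pass oc) p ?m1) u2"
  have "admissible oc p ?m1" "admissible oc q ?m2"
    using col unfolding colouring_def p_def q_def by (simp_all only: admissible_append foldl_append)
  then have r: "oc a = (if ov then p else q)" "oc b = (if ov then p else q)"
    using admissible_r2_blocks[OF ab] by blast+
  then have "foldl (pass oc) p ?m1 = p"
    using foldl_r2_blocks[OF ab] by simp
  then have q: "q = foldl (pass oc) c (u1 @ u2)"
    by (simp add: q_def p_def)
  have "colouring oc c (u1 @ u2 @ u3)"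
    using col colouring_remove_r2_blocks[OF ab _ \<open>admissible oc p ?m1\<close>[unfolded p_def]]
      \<open>admissible oc q ?m2\<close>[unfolded q] r by simp
  moreover have "fst ` set (u1 @ ?m1 @ u2 @ ?m2 @ u3) \<subseteq> fst ` set (u1 @ u2 @ u3) \<union> {a, b}"
    using ab by auto
  moreover have "oc ` {a, b} \<subseteq> walk_colours oc c (u1 @ u2 @ u3)"
    using r q prefix_end_in_walk_colours[of oc c u1 "u2 @ u3"]
      prefix_end_in_walk_colours[of oc c "u1 @ u2" u3]
    unfolding p_def by simp
  ultimately show ?thesis
    by (rule nontrivially_colourable_if_covered[OF assms(1) _ _ _ xy])
qed

lemma nontrivially_colourable_r2_insert:
  assumes wf: "gauss_wf (u1 @ [(a, ov), (b, ov)] @ u2 @ [(a', \<not> ov), (b', \<not> ov)] @ u3)"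
    and ab: "{a', b'} = {a, b}" and "nontrivially_colourable (u1 @ u2 @ u3)"
  shows "nontrivially_colourable (u1 @ [(a, ov), (b, ov)] @ u2 @ [(a', \<not> ov), (b', \<not> ov)] @ u3)"
proof -
  let ?m1 = "[(a, ov), (b, ov)]" and ?m2 = "[(a', \<not> ov), (b', \<not> ov)]"
  obtain oc c x y where col: "colouring oc c (u1 @ u2 @ u3)"
    and xy: "x \<in> fst ` set (u1 @ u2 @ u3)" "y \<in> fst ` set (u1 @ u2 @ u3)" "oc x \<noteq> oc y"
    using assms(3) unfolding nontrivially_colourable_def by blast
  have disjoint: "set (u1 @ u2 @ u3) \<inter> set (?m1 @ ?m2) = {}"
    using wf unfolding gauss_wf_def by auto
  have fresh: "z \<notin> fst ` set (u1 @ u2 @ u3)" if "z \<in> {a, b}" for z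
    using that ab by (intro crossing_notin_if_both_passages[OF disjoint])
      (cases ov; force simp: doubleton_eq_iff)+
  define p where "p = foldl (pass oc) c u1"
  define q where "q = foldl (pass oc) p u2"
  define oc' where "oc' = oc(a := if ov then p else q, b := if ov then p else q)"
  have same: "\<forall>z\<in>fst ` set (u1 @ u2 @ u3). oc' z = oc z"
    using fresh by (auto simp: oc'_def)
  then have "foldl (pass oc') c u1 = p" "foldl (pass oc') c (u1 @ u2) = q"
    "colouring oc' c (u1 @ u2 @ u3)"
    using col walk_cong[of "u1 @ u2 @ u3" oc' oc c] walk_cong[of u1 oc' oc c]
      walk_cong[of "u1 @ u2" oc' oc c]
    unfolding colouring_def p_def q_def by auto
  moreover have "oc' a = (if ov then p else q)" "oc' b = (if ov then p else q)"
    by (simp_all add: oc'_def)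
  ultimately have "colouring oc' c (u1 @ ?m1 @ u2 @ ?m2 @ u3)"
    using colouring_remove_r2_blocks[OF ab, of oc' c u1 ov u2 u3] admissible_r2_blocks[OF ab, of oc' p ov q]
    by simp
  moreover have "oc' x \<noteq> oc' y"
    using xy same by (metis image_eqI)
  ultimately show ?thesis
    using xy nontrivially_colourableI[of oc' c "u1 @ ?m1 @ u2 @ ?m2 @ u3" x y] by auto
qed

lemma colouring_concat_transfer:
  assumes "list_all2 (\<lambda>m m'. \<forall>p. admissible oc p m \<longrightarrow>
      admissible oc' p m' \<and> foldl (pass oc') p m' = foldl (pass oc) p m) ms ms'"
    and "colouring oc c (concat ms)"
  shows "colouring oc' c (concat ms')"
proof -
  have "admissible oc p (concat ms) \<Longrightarrow>
    admissible oc' p (concat ms') \<and> foldl (pass oc') p (concat ms') = foldl (pass oc) p (concat ms)"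
    for p using assms(1) by (induction ms ms' arbitrary: p rule: list_all2_induct) auto
  then show ?thesis using assms(2) unfolding colouring_def by simp
qed

lemma admissible_concat_block:
  "admissible oc p (concat ms) \<Longrightarrow> m \<in> set ms \<Longrightarrow> \<exists>q. admissible oc q m"
  by (induction ms arbitrary: p) auto

text \<open>The move reverses the order in which the middle strand meets x and z, so the colour of
  its arc over z becomes oc z \<rhd> oc x; the top strand runs over x and y on one arc.\<close>

lemma r3_pair_transfer:
  assumes "(s, t) \<in> {ordpair oT (x, True) (y, True), ordpair oM (x, False) (z, True),
      ordpair oB (y, False) (z, False)}"
    and "x \<noteq> z" "y \<noteq> z" "oc y = oc x" "admissible oc p [s, t]"
  shows "admissible (oc(z := oc z \<rhd> oc x)) p [t, s] \<and>
    foldl (pass (oc(z := oc z \<rhd> oc x))) p [t, s] = foldl (pass oc) p [s, t]"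
proof -
  have "u \<rhd> (v \<rhd> w) \<rhd> w = u \<rhd> w \<rhd> v" for u v w
    by (metis kei_right_distrib kei_invol)
  with assms show ?thesis
    unfolding ordpair_def by (auto split: if_splits simp: kei_right_distrib[symmetric])
qed

lemma colouring_r3:
  assumes "distinct (u1 @ [s1, t1] @ u2 @ [s2, t2] @ u3 @ [s3, t3] @ u4)"
    and "distinct [x, y, z]"
    and pairs: "{(s1, t1), (s2, t2), (s3, t3)} = {ordpair oT (x, True) (y, True),
      ordpair oM (x, False) (z, True), ordpair oB (y, False) (z, False)}"
    and "colouring oc c (u1 @ [s1, t1] @ u2 @ [s2, t2] @ u3 @ [s3, t3] @ u4)"
  shows "colouring (oc(z := oc z \<rhd> oc x)) c (u1 @ [t1, s1] @ u2 @ [t2, s2] @ u3 @ [t3, s3] @ u4)"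
proof -
  let ?ms = "[u1, [s1, t1], u2, [s2, t2], u3, [s3, t3], u4]"
  let ?ps = "[s1, t1, s2, t2, s3, t3]"
  define oc' where "oc' = oc(z := oc z \<rhd> oc x)"
  have col: "colouring oc c (concat ?ms)"
    using assms(4) by simp
  have top: "ordpair oT (x, True) (y, True) \<in> {(s1, t1), (s2, t2), (s3, t3)}"
    and middle: "ordpair oM (x, False) (z, True) \<in> {(s1, t1), (s2, t2), (s3, t3)}"
    and bottom: "ordpair oB (y, False) (z, False) \<in> {(s1, t1), (s2, t2), (s3, t3)}"
    unfolding pairs by simp_all
  have "\<exists>p. admissible oc p [fst (ordpair oT (x, True) (y, True)), snd (ordpair oT (x, True) (y, True))]"
    using col top admissible_concat_block[of oc c ?ms] unfolding colouring_def by auto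
  then have "oc y = oc x"
    unfolding ordpair_def by (cases oT) auto
  have "set (u1 @ u2 @ u3 @ u4) \<inter> set ?ps = {}"
    using assms(1) by auto
  moreover have "(z, True) \<in> set ?ps" "(z, False) \<in> set ?ps"
    using middle bottom unfolding ordpair_def by (cases oM; cases oB; auto)+
  ultimately have "z \<notin> fst ` set (u1 @ u2 @ u3 @ u4)"
    by (rule crossing_notin_if_both_passages)
  then have same: "\<forall>a\<in>fst ` set u. oc' a = oc a" if "u \<in> {u1, u2, u3, u4}" for u
    using that by (auto simp: oc'_def)
  have u_blocks: "\<forall>p. admissible oc p u \<longrightarrow>
      admissible oc' p u \<and> foldl (pass oc') p u = foldl (pass oc) p u" if "u \<in> {u1, u2, u3, u4}" for u
    using walk_cong[OF same[OF that]] by simp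
  have "x \<noteq> z" "y \<noteq> z"
    using assms(2) by auto
  have pair_blocks: "\<forall>p. admissible oc p [s, t] \<longrightarrow>
      admissible oc' p [t, s] \<and> foldl (pass oc') p [t, s] = foldl (pass oc) p [s, t]"
    if "(s, t) \<in> {(s1, t1), (s2, t2), (s3, t3)}" for s t
    unfolding oc'_def
    using r3_pair_transfer[OF that[unfolded pairs] \<open>x \<noteq> z\<close> \<open>y \<noteq> z\<close> \<open>oc y = oc x\<close>] by blast
  have "colouring oc' c (concat [u1, [t1, s1], u2, [t2, s2], u3, [t3, s3], u4])"
    using u_blocks[of u1] u_blocks[of u2] u_blocks[of u3] u_blocks[of u4]
      pair_blocks[of s1 t1] pair_blocks[of s2 t2] pair_blocks[of s3 t3]
    by (intro colouring_concat_transfer[OF _ col]) simp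
  then show ?thesis
    by (simp add: oc'_def)
qed

lemma nontrivially_colourable_r3:
  assumes "distinct (u1 @ [s1, t1] @ u2 @ [s2, t2] @ u3 @ [s3, t3] @ u4)"
    and "distinct [x, y, z]"
    and pairs: "{(s1, t1), (s2, t2), (s3, t3)} = {ordpair oT (x, True) (y, True),
      ordpair oM (x, False) (z, True), ordpair oB (y, False) (z, False)}"
    and "nontrivially_colourable (u1 @ [s1, t1] @ u2 @ [s2, t2] @ u3 @ [s3, t3] @ u4)"
  shows "nontrivially_colourable (u1 @ [t1, s1] @ u2 @ [t2, s2] @ u3 @ [t3, s3] @ u4)"
    (is "nontrivially_colourable ?w'")
proof -
  let ?w = "u1 @ [s1, t1] @ u2 @ [s2, t2] @ u3 @ [s3, t3] @ u4"
  obtain oc c a b where col: "colouring oc c ?w"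
    and ab: "a \<in> fst ` set ?w" "b \<in> fst ` set ?w" "oc a \<noteq> oc b"
    using assms(4) unfolding nontrivially_colourable_def by blast
  define oc' where "oc' = oc(z := oc z \<rhd> oc x)"
  have col': "colouring oc' c ?w'"
    unfolding oc'_def using colouring_r3[OF assms(1-3) col] .
  have crossings: "fst ` set ?w' = fst ` set ?w"
    by auto
  have "ordpair oT (x, True) (y, True) \<in> {(s1, t1), (s2, t2), (s3, t3)}"
    "ordpair oM (x, False) (z, True) \<in> {(s1, t1), (s2, t2), (s3, t3)}"
    unfolding pairs by simp_all
  then have "(x, True) \<in> set [s1, t1, s2, t2, s3, t3]" "(z, True) \<in> set [s1, t1, s2, t2, s3, t3]"
    unfolding ordpair_def by (cases oT; cases oM; auto)+
  then have "x \<in> fst ` set ?w" "z \<in> fst ` set ?w"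
    by force+
  show ?thesis
  proof (cases "oc' z = oc' x")
    case False
    then show ?thesis
      using col' crossings \<open>x \<in> _\<close> \<open>z \<in> _\<close> nontrivially_colourableI by simp
  next
    case True
    then have "oc' = oc"
      using assms(2) by (auto simp: oc'_def kei_fixed_iff)
    then show ?thesis
      using col' crossings ab nontrivially_colourableI by simp
  qed
qed

lemma gmove_nontrivially_colourable:
  assumes "gmove d d'"
  shows "nontrivially_colourable (fst d') \<longleftrightarrow> nontrivially_colourable (fst d)"
proof -
  have wf: "gauss_wf (fst d)" "gauss_wf (fst d')"
    using assms unfolding gmove_def by blast+
  from assms consider
      (rotate) "fst d' = rotate1 (fst d)"
    | (relabel) f where "inj_on f (fst ` set (fst d))" "fst d' = map (\<lambda>(a, ov). (f a, ov)) (fst d)"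
    | (r1) u v a ov where "fst d = u @ [(a, ov), (a, \<not> ov)] @ v" "fst d' = u @ v"
    | (r2) u1 u2 u3 a b a' b' ov where
        "fst d = u1 @ [(a, ov), (b, ov)] @ u2 @ [(a', \<not> ov), (b', \<not> ov)] @ u3"
        "{a', b'} = {a, b}" "fst d' = u1 @ u2 @ u3"
    | (r3) u1 u2 u3 u4 s1 t1 s2 t2 s3 t3 where
        "fst d = u1 @ [s1, t1] @ u2 @ [s2, t2] @ u3 @ [s3, t3] @ u4"
        "fst d' = u1 @ [t1, s1] @ u2 @ [t2, s2] @ u3 @ [t3, s3] @ u4"
        "r3_ok (snd d) {(s1, t1), (s2, t2), (s3, t3)}"
    unfolding gmove_def by (elim conjE disjE exE) blast+
  then show ?thesis
  proof cases
    case rotate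
    then show ?thesis
      using nontrivially_colourable_rotate[of "[hd (fst d)]" "tl (fst d)"]
        nontrivially_colourable_rotate[of "tl (fst d)" "[hd (fst d)]"]
      by (cases "fst d") auto
  next
    case relabel
    then show ?thesis
      using nontrivially_colourable_relabel by simp
  next
    case r1
    then show ?thesis
      using wf nontrivially_colourable_r1_remove nontrivially_colourable_r1_insert by metis
  next
    case r2
    then show ?thesis
      using wf nontrivially_colourable_r2_remove nontrivially_colourable_r2_insert by metis
  next
    case r3
    then obtain x y z oT oM oB where "distinct [x, y, z]"
      and pairs: "{(s1, t1), (s2, t2), (s3, t3)} = {ordpair oT (x, True) (y, True),
        ordpair oM (x, False) (z, True), ordpair oB (y, False) (z, False)}"
      unfolding r3_ok_def by blast
    then show ?thesis
      using r3 wf nontrivially_colourable_r3 r3_pairs_swap[OF pairs]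
      unfolding gauss_wf_def by metis
  qed
qed

lemma gequiv_nontrivially_colourable:
  assumes "gequiv d d'"
  shows "nontrivially_colourable (fst d') \<longleftrightarrow> nontrivially_colourable (fst d)"
  using assms unfolding gequiv_def equivclp_def
proof (induction rule: rtranclp_induct)
  case (step d' d'')
  then show ?case
    using gmove_nontrivially_colourable unfolding symclp_def by blast
qed simp

end

section \<open>Fox 5-colourings\<close>

lemma kei_dihedral: "kei (\<lambda>x y :: 'a :: comm_ring_1. 2 * y - x)"
  by unfold_locales (simp_all add: algebra_simps)

interpretation fox5: kei "\<lambda>x y :: 5. 2 * y - x"
  by (rule kei_dihedral)

lemma UNIV_5: "(UNIV :: 5 set) = {0, 1, 2, 3, 4}"
proof -
  have "card {0 :: 5, 1, 2, 3, 4} = CARD(5)"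
    by simp
  then show ?thesis
    using card_subset_eq[of UNIV "{0 :: 5, 1, 2, 3, 4}"] by simp
qed

lemma all_5: "(\<forall>x :: 5. P x) \<longleftrightarrow> P 0 \<and> P 1 \<and> P 2 \<and> P 3 \<and> P 4"
  by (metis UNIV_5 UNIV_I empty_iff insert_iff)

lemma length_le_3_cases:
  assumes "length xs \<le> 3"
  obtains "xs = []" | a1 where "xs = [a1]" | a1 a2 where "xs = [a1, a2]"
    | a1 a2 a3 where "xs = [a1, a2, a3]"
proof -
  have "length xs = 0 \<or> length xs = 1 \<or> length xs = 2 \<or> length xs = 3"
    using assms by linarith
  then show ?thesis
    using that by (auto simp: numeral_2_eq_2 numeral_3_eq_3 length_Suc_conv)
qed

lemma fox5_short_under_walk_constant:
  assumes "length as \<le> 3"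
    and "foldl (fox5.pass oc) c (map (\<lambda>a. (a, False)) as) = c"
    and "\<forall>a\<in>set as. oc a \<in> fox5.walk_colours oc c (map (\<lambda>a. (a, False)) as)"
  shows "\<exists>r. \<forall>a\<in>set as. oc a = r"
  using assms(1)
proof (cases rule: length_le_3_cases)
  case (3 a1 a2)
  have "\<forall>c y1 y2 :: 5. 2 * y2 - (2 * y1 - c) = c \<longrightarrow>
      {y1, y2} \<subseteq> {c, 2 * y1 - c, 2 * y2 - (2 * y1 - c)} \<longrightarrow> y1 = y2"
    unfolding all_5 by simp
  moreover have "foldl (fox5.pass oc) c (map (\<lambda>a. (a, False)) as) = 2 * oc a2 - (2 * oc a1 - c)"
    "fox5.walk_colours oc c (map (\<lambda>a. (a, False)) as) = {c, 2 * oc a1 - c, 2 * oc a2 - (2 * oc a1 - c)}"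
    unfolding 3 by simp_all
  then have "2 * oc a2 - (2 * oc a1 - c) = c"
    "{oc a1, oc a2} \<subseteq> {c, 2 * oc a1 - c, 2 * oc a2 - (2 * oc a1 - c)}"
    using assms(2,3) unfolding 3 list.set by auto
  ultimately have "oc a1 = oc a2"
    by blast
  then show ?thesis
    using 3 by auto
next
  case (4 a1 a2 a3)
  have "\<forall>c y1 y2 y3 :: 5. 2 * y3 - (2 * y2 - (2 * y1 - c)) = c \<longrightarrow>
      {y1, y2, y3} \<subseteq> {c, 2 * y1 - c, 2 * y2 - (2 * y1 - c), 2 * y3 - (2 * y2 - (2 * y1 - c))} \<longrightarrow>
      y1 = y2 \<and> y2 = y3"
    unfolding all_5 by simp
  moreover have "foldl (fox5.pass oc) c (map (\<lambda>a. (a, False)) as) =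
      2 * oc a3 - (2 * oc a2 - (2 * oc a1 - c))"
    "fox5.walk_colours oc c (map (\<lambda>a. (a, False)) as) =
      {c, 2 * oc a1 - c, 2 * oc a2 - (2 * oc a1 - c), 2 * oc a3 - (2 * oc a2 - (2 * oc a1 - c))}"
    unfolding 4 by simp_all
  then have "2 * oc a3 - (2 * oc a2 - (2 * oc a1 - c)) = c"
    "{oc a1, oc a2, oc a3} \<subseteq>
      {c, 2 * oc a1 - c, 2 * oc a2 - (2 * oc a1 - c), 2 * oc a3 - (2 * oc a2 - (2 * oc a1 - c))}"
    using assms(2,3) unfolding 4 list.set by auto
  ultimately have "oc a1 = oc a2" "oc a2 = oc a3"
    by blast+
  then show ?thesis
    using 4 by auto
qed auto

lemma fox5_not_nontrivially_colourable_if_few_crossings: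
  assumes "gauss_wf w" and "card (fst ` set w) \<le> 3"
  shows "\<not> fox5.nontrivially_colourable w"
proof
  assume "fox5.nontrivially_colourable w"
  then obtain oc c a b where col: "fox5.colouring oc c w"
    and ab: "a \<in> fst ` set w" "b \<in> fst ` set w" "oc a \<noteq> oc b"
    unfolding fox5.nontrivially_colourable_def by blast
  define as where "as = map fst (filter (\<lambda>x. \<not> snd x) w)"
  have unders: "filter (\<lambda>x. \<not> snd x) w = map (\<lambda>a. (a, False)) as"
    unfolding as_def by (induction w) auto
  have "set as = fst ` set w"
    using gauss_wf_other_passage[OF assms(1)] unfolding as_def by force
  moreover have "distinct as"
    using assms(1) unfolding as_def gauss_wf_def
    by (auto simp: distinct_map inj_on_def prod_eq_iff)
  ultimately have "length as \<le> 3"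
    using assms(2) distinct_card by metis
  moreover have "foldl (fox5.pass oc) c (map (\<lambda>a. (a, False)) as) = c"
    using col fox5.walk_ignores_over_passages unfolding fox5.colouring_def unders[symmetric] by simp
  moreover have "\<forall>a\<in>set as. oc a \<in> fox5.walk_colours oc c (map (\<lambda>a. (a, False)) as)"
    using col fox5.walk_ignores_over_passages fox5.over_colour_in_walk_colours
      gauss_wf_other_passage[OF assms(1)] \<open>set as = fst ` set w\<close>
    unfolding fox5.colouring_def unders[symmetric] by (metis imageE prod.collapse)
  ultimately obtain r where "\<forall>a\<in>set as. oc a = r"
    using fox5_short_under_walk_constant by blast
  then have "oc a = r" "oc b = r"
    using ab(1,2) \<open>set as = fst ` set w\<close> by auto
  then show False
    using ab(3) by simp
qed

lemma fox5_nontrivially_colourable_figure_eight: "fox5.nontrivially_colourable (fst figure_eight)"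
proof -
  have "fox5.colouring of_nat 1 (fst figure_eight)"
    by (simp add: fox5.colouring_def figure_eight_def)
  moreover have "1 \<in> fst ` set (fst figure_eight)" "2 \<in> fst ` set (fst figure_eight)"
    by (simp_all add: figure_eight_def)
  moreover have "(of_nat 1 :: 5) \<noteq> of_nat 2"
    by simp
  ultimately show ?thesis
    by (rule fox5.nontrivially_colourableI)
qed

section \<open>Mosaics of the figure-eight knot\<close>

lemma cyclic_successor_iff_map_eq_rotate1:
  "(\<forall>k<length xs. xs ! ((k + 1) mod length xs) = f (xs ! k)) \<longleftrightarrow> map f xs = rotate1 xs"
  by (auto simp: list_eq_iff_nth_eq nth_rotate1)

definition fig8_tiles :: "nat \<Rightarrow> nat \<Rightarrow> tile" where
  "fig8_tiles i j = (if j = 0 \<or> j = 2 then T9 else T10)"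

definition fig8_pairing :: "hedge \<Rightarrow> hedge" where
  "fig8_pairing h =
    (if h = (0, 0, N) then (0, 1, N) else if h = (0, 1, N) then (0, 0, N)
     else if h = (0, 2, N) then (0, 0, W) else if h = (0, 0, W) then (0, 2, N)
     else if h = (0, 0, S) then (0, 3, N) else if h = (0, 3, N) then (0, 0, S)
     else if h = (0, 1, S) then (0, 3, E) else if h = (0, 3, E) then (0, 1, S)
     else if h = (0, 2, S) then (0, 3, S) else if h = (0, 3, S) then (0, 2, S)
     else h)"

definition fig8_traversal :: "hedge list" where
  "fig8_traversal = [(0, 0, N), (0, 3, N), (0, 2, S), (0, 0, W), (0, 1, W), (0, 2, W), (0, 3, W), (0, 1, S)]"

lemma boundary_edges_1_4:
  "boundary_edges 1 4 = {(0, 0, N), (0, 1, N), (0, 2, N), (0, 3, N), (0, 0, S), (0, 1, S), (0, 2, S),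
    (0, 3, S), (0, 0, W), (0, 3, E)}"
  unfolding boundary_edges_def by (auto simp: less_Suc_eq)

lemma all_side: "(\<forall>d. P d) \<longleftrightarrow> P N \<and> P E \<and> P S \<and> P W"
  by (metis side.exhaust)

lemma all_less_4: "(\<forall>j < 4. P j) \<longleftrightarrow> P 0 \<and> P 1 \<and> P 2 \<and> P (3 :: nat)"
  by (auto simp: less_Suc_eq numeral_eq_Suc)

lemma virtual_mosaic_fig8: "virtual_mosaic 1 4 fig8_tiles fig8_pairing"
  unfolding virtual_mosaic_def boundary_edges_1_4 all_less_4 all_side
  by (simp add: fig8_pairing_def across_def boundary_edges_def has_end_def fig8_tiles_def)

lemma knot_traversal_fig8: "knot_traversal 1 4 fig8_tiles fig8_pairing fig8_traversal"
  unfolding knot_traversal_def cyclic_successor_iff_map_eq_rotate1 all_less_4 all_side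
  by (simp add: fig8_traversal_def has_end_def exit_of_def fig8_tiles_def step_def across_def
      boundary_edges_def fig8_pairing_def)

lemma gequiv_fig8: "gequiv (mosaic_gauss 4 fig8_tiles fig8_traversal) figure_eight"
proof -
  let ?d = "mosaic_gauss 4 fig8_tiles fig8_traversal"
  have word: "fst ?d =
      [(0, True), (3, False), (2, True), (0, False), (1, True), (2, False), (3, True), (1, False)]"
    by (simp add: mosaic_gauss_def fig8_traversal_def passage_def fig8_tiles_def)
  have sign: "snd ?d = mosaic_sign 4 fig8_tiles fig8_traversal"
    by (simp add: mosaic_gauss_def)
  have "\<exists>f. inj_on f (fst ` set (fst ?d)) \<and> fst figure_eight = map (\<lambda>(a, ov). (f a, ov)) (fst ?d) \<and>
      (\<forall>a\<in>fst ` set (fst ?d). snd figure_eight (f a) = snd ?d a)"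
    unfolding word sign
    by (intro exI[of _ "\<lambda>a. [1, 4, 3, 2] ! a"])
      (simp add: figure_eight_def mosaic_sign_def fig8_traversal_def fig8_tiles_def inj_on_def)
  moreover have "gauss_wf (fst ?d)" "gauss_wf (fst figure_eight)"
    by (simp_all add: word figure_eight_def gauss_wf_def)
  ultimately have "gmove ?d figure_eight"
    unfolding gmove_def by blast
  then show ?thesis
    unfolding gequiv_def by (rule r_into_equivclp)
qed

lemma mosaic_represents_figure_eight: "mosaic_represents 1 4 fig8_tiles fig8_pairing figure_eight"
  unfolding mosaic_represents_def using virtual_mosaic_fig8 knot_traversal_fig8 gequiv_fig8 by blast

lemma mosaic_gauss_crossing_less:
  assumes "knot_traversal m n M P hs" and "x \<in> set (fst (mosaic_gauss n M hs))"
  shows "fst x < m * n"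
proof -
  obtain i j d where h: "(i, j, d) \<in> set hs" "x \<in> set (passage n M (i, j, d))"
    using assms(2) unfolding mosaic_gauss_def by auto
  then have "i < m" "j < n"
    using assms(1) unfolding knot_traversal_def by auto
  have "fst x = i * n + j"
    using h(2) by (auto simp: passage_def split: if_splits)
  also have "\<dots> < (i + 1) * n"
    using \<open>j < n\<close> by simp
  also have "\<dots> \<le> m * n"
    using \<open>i < m\<close> by (intro mult_le_mono1) simp
  finally show ?thesis .
qed

lemma figure_eight_tiles_ge_4:
  assumes "mosaic_represents m n M P figure_eight"
  shows "4 \<le> m * n"
proof (rule ccontr)
  assume "\<not> 4 \<le> m * n"
  obtain hs where "knot_traversal m n M P hs" and equiv: "gequiv (mosaic_gauss n M hs) figure_eight"
    using assms unfolding mosaic_represents_def by blast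
  let ?w = "fst (mosaic_gauss n M hs)"
  have "fst ` set ?w \<subseteq> {..<m * n}"
    using mosaic_gauss_crossing_less[OF \<open>knot_traversal m n M P hs\<close>] by auto
  then have "card (fst ` set ?w) \<le> 3"
    using card_mono[of "{..<m * n}" "fst ` set ?w"] \<open>\<not> 4 \<le> m * n\<close> by simp
  moreover have "gauss_wf ?w"
    using gequiv_gauss_wf[OF equiv] by (simp add: figure_eight_def gauss_wf_def)
  moreover have "fox5.nontrivially_colourable ?w"
    using fox5.gequiv_nontrivially_colourable[OF equiv] fox5_nontrivially_colourable_figure_eight
    by simp
  ultimately show False
    using fox5_not_nontrivially_colourable_if_few_crossings by blast
qed

theorem mainTheorem1:
  shows "tile_number figure_eight = 4 \<and> (\<exists>M P. mosaic_represents 1 4 M P figure_eight)"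
proof
  show "\<exists>M P. mosaic_represents 1 4 M P figure_eight"
    using mosaic_represents_figure_eight by blast
  show "tile_number figure_eight = 4"
    unfolding tile_number_def
  proof (rule Least_equality)
    show "\<exists>m n M P. m * n = 4 \<and> mosaic_represents m n M P figure_eight"
      using mosaic_represents_figure_eight by (intro exI[of _ 1] exI[of _ 4]) auto
    show "4 \<le> t" if "\<exists>m n M P. m * n = t \<and> mosaic_represents m n M P figure_eight" for t
      using that figure_eight_tiles_ge_4 by blast
  qed
qed

end
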